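(* Let $H$ and $K$ be finite-dimensional complex Hilbert spaces, let $\mathcal{C}$ be a mapping cone on $K$, and let $B$ be a C*-subalgebra of $B(H)$ containing the identity $1$. If $\phi: B\to B(K)$ is a $\mathcal{C}$-positive linear map, then there is a $\mathcal{C}$-positive linear map $\psi: B(H)\to B(K)$ extending $\phi$.
   Context: A mapping cone $\mathcal{C}$ on $K$ is a closed convex cone of positive linear maps $B(K)\to B(K)$ such that $\alpha\in\mathcal{C}$ implies $\beta\circ\alpha\circ\gamma\in\mathcal{C}$ for all completely positive maps $\beta,\gamma: B(K)\to B(K)$. Fix an orthonormal basis of $K$ and let $b^t$ denote the transpose of $b\in B(K)$; $Tr$ is the usual trace. For a linear subspace $A\subseteq B(H)$ containing $1$, let $A\otimes B(K)\subseteq B(H\otimes K)$ be the span of $\{a\otimes b: a\in A, b\in B(K)\}$. For a linear map $\phi: A\to B(K)$, its dual functional $\tilde\phi$ is the linear functional on $A\otimes B(K)$ with $\tilde\phi(a\otimes b)=Tr(\phi(a)b^t)$. Let $P(A,\mathcal{C})=\{x\in (A\otimes B(K))_{sa} : (\iota\otimes\alpha)(x)\ge 0 \ \forall \alpha\in\mathcal{C}\}$, with $\iota$ the identity map on $B(H)$. The map $\phi$ is $\mathcal{C}$-positive if $\tilde\phi(x)\ge 0$ for all $x\in P(A,\mathcal{C})$. *)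

theory Defs
  imports "HOL-Analysis.Analysis"
begin

text \<open>Finite-dimensional complex Hilbert spaces H, K are modelled as complex^'n, complex^'k
(standard orthonormal basis); B(H) is the type of complex 'n x 'n matrices complex^'n^'n,
and H (x) K is complex^('n \<times> 'k).\<close>

type_synonym 'n cmat = "complex^'n^'n"

definition smat :: "complex \<Rightarrow> 'n::finite cmat \<Rightarrow> 'n::finite cmat" where
  "smat c A = (\<chi> i j. c * A $ i $ j)"

definition mc_adj :: "'n::finite cmat \<Rightarrow> 'n::finite cmat" where
  "mc_adj A = (\<chi> i j. cnj (A $ j $ i))"

definition mtr :: "'n::finite cmat \<Rightarrow> complex" where
  "mtr A = (\<Sum>i\<in>UNIV. A $ i $ i)"

definition cpsd :: "'n::finite cmat \<Rightarrow> bool" where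
  "cpsd A \<longleftrightarrow> (\<forall>x::complex^'n.
     (let q = (\<Sum>i\<in>UNIV. cnj (x $ i) * (A *v x) $ i) in Im q = 0 \<and> Re q \<ge> 0))"

definition kron :: "'n::finite cmat \<Rightarrow> 'k::finite cmat \<Rightarrow> ('n::finite \<times> 'k::finite) cmat" where
  "kron a b = (\<chi> p q. a $ fst p $ fst q * b $ snd p $ snd q)"

definition cspan :: "'n::finite cmat set \<Rightarrow> 'n::finite cmat set" where
  "cspan S = {x. \<exists>m (c::nat \<Rightarrow> complex) s. (\<forall>i<m. s i \<in> S) \<and> x = (\<Sum>i<m. smat (c i) (s i))}"

definition tensor_space :: "'n::finite cmat set \<Rightarrow> ('n::finite \<times> 'k::finite) cmat set" where
  "tensor_space A = cspan {kron a b | a b. a \<in> A}"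

text \<open>(\<iota> \<otimes> \<alpha>)(x): apply \<alpha> to each K-block of x.\<close>
definition id_tensor :: "('k::finite cmat \<Rightarrow> 'k::finite cmat) \<Rightarrow> ('n::finite \<times> 'k::finite) cmat \<Rightarrow> ('n::finite \<times> 'k::finite) cmat" where
  "id_tensor \<alpha> x = (\<chi> p q. \<alpha> (\<chi> k l. x $ (fst p, k) $ (fst q, l)) $ snd p $ snd q)"

definition clinear_on :: "'n::finite cmat set \<Rightarrow> ('n::finite cmat \<Rightarrow> 'k::finite cmat) \<Rightarrow> bool" where
  "clinear_on A f \<longleftrightarrow> (\<forall>a\<in>A. \<forall>b\<in>A. \<forall>c. f (a + b) = f a + f b \<and> f (smat c a) = smat c (f a))"

definition positive_map :: "('k::finite cmat \<Rightarrow> 'k::finite cmat) \<Rightarrow> bool" where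
  "positive_map f \<longleftrightarrow> clinear_on UNIV f \<and> (\<forall>A. cpsd A \<longrightarrow> cpsd (f A))"

text \<open>Positivity of an m x m block matrix with blocks in B(K), i.e. an element of M_m(B(K)).\<close>
definition block_psd :: "nat \<Rightarrow> (nat \<Rightarrow> nat \<Rightarrow> 'k::finite cmat) \<Rightarrow> bool" where
  "block_psd m A \<longleftrightarrow> (\<forall>x::nat \<Rightarrow> complex^'k.
     (let q = (\<Sum>i<m. \<Sum>j<m. \<Sum>k\<in>UNIV. cnj (x i $ k) * (A i j *v x j) $ k)
      in Im q = 0 \<and> Re q \<ge> 0))"

definition completely_positive :: "('k::finite cmat \<Rightarrow> 'k::finite cmat) \<Rightarrow> bool" where
  "completely_positive f \<longleftrightarrow> clinear_on UNIV f \<and>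
     (\<forall>m A. block_psd m A \<longrightarrow> block_psd m (\<lambda>i j. f (A i j)))"

definition mapping_cone :: "('k::finite cmat \<Rightarrow> 'k::finite cmat) set \<Rightarrow> bool" where
  "mapping_cone C \<longleftrightarrow>
     C \<noteq> {} \<and> closed C \<and>
     (\<forall>\<alpha>\<in>C. positive_map \<alpha>) \<and>
     (\<forall>\<alpha>\<in>C. \<forall>\<beta>\<in>C. (\<lambda>X. \<alpha> X + \<beta> X) \<in> C) \<and>
     (\<forall>\<alpha>\<in>C. \<forall>t::real. t \<ge> 0 \<longrightarrow> (\<lambda>X. smat (complex_of_real t) (\<alpha> X)) \<in> C) \<and>
     (\<forall>\<alpha>\<in>C. \<forall>\<beta> \<gamma>. completely_positive \<beta> \<and> completely_positive \<gamma> \<longrightarrow> \<beta> \<circ> \<alpha> \<circ> \<gamma> \<in> C)"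

definition P_set :: "'n::finite cmat set \<Rightarrow> ('k::finite cmat \<Rightarrow> 'k::finite cmat) set \<Rightarrow> ('n::finite \<times> 'k::finite) cmat set" where
  "P_set A C = {x. x \<in> tensor_space A \<and> mc_adj x = x \<and> (\<forall>\<alpha>\<in>C. cpsd (id_tensor \<alpha> x))}"

text \<open>\<phi> is C-positive on A: the dual functional \<phi>~, given on any representation
x = \<Sum> c_i (a_i \<otimes> b_i) by \<Sum> c_i Tr(\<phi>(a_i) b_i^t), is \<ge> 0 on P(A,C).\<close>
definition C_positive :: "('k::finite cmat \<Rightarrow> 'k::finite cmat) set \<Rightarrow> 'n::finite cmat set \<Rightarrow> ('n::finite cmat \<Rightarrow> 'k::finite cmat) \<Rightarrow> bool" where
  "C_positive C A \<phi> \<longleftrightarrow> (\<forall>x\<in>P_set A C. \<forall>m (c::nat \<Rightarrow> complex) a b.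
     (\<forall>i<m. a i \<in> A) \<and> x = (\<Sum>i<m. smat (c i) (kron (a i) (b i))) \<longrightarrow>
     (let v = (\<Sum>i<m. c i * mtr (\<phi> (a i) ** transpose (b i))) in Im v = 0 \<and> Re v \<ge> 0))"

definition unital_cstar_subalg :: "'n::finite cmat set \<Rightarrow> bool" where
  "unital_cstar_subalg B \<longleftrightarrow> mat 1 \<in> B \<and> closed B \<and>
     (\<forall>a\<in>B. \<forall>b\<in>B. a + b \<in> B \<and> a ** b \<in> B) \<and>
     (\<forall>a\<in>B. \<forall>c. smat c a \<in> B) \<and> (\<forall>a\<in>B. mc_adj a \<in> B)"

end

theory Submission
  imports Defs
begin

text \<open>The map \<psi> is C-positive iff its dual functional is nonnegative on the cone
  P = P(B(H), C). The identity 1 \<otimes> 1 is an order unit of P: every self-adjoint y is a real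
  combination of tensor products of rank-one projections onto vectors e_i + c e_j with
  |c| = 1, each of which lies between 0 and 16 (1 \<otimes> 1) in the order of P, so
  y + M \<parallel>y\<parallel> (1 \<otimes> 1) \<in> P for a constant M. By the M. Riesz extension theorem (separation of a
  convex cone from a point outside its closure), the real part of the dual functional of \<phi>
  on the self-adjoint part of B \<otimes> B(K) extends to a real linear functional that is
  nonnegative on P. Its complexification F is the dual functional of the map
  \<psi>(a)_kl = F(a \<otimes> E_kl), which extends \<phi>.\<close>

section \<open>Extension of positive functionals in finite dimension\<close>

lemma convex_cone_separating_functional:
  fixes D :: "'a::euclidean_space set"
  assumes D: "convex_cone D" and z: "z \<notin> closure D"
  shows "\<exists>a. inner a z < 0 \<and> (\<forall>d\<in>D. 0 \<le> inner a d)"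
proof -
  have "convex (closure D)"
    using D by (simp add: convex_cone_def convex_closure)
  then obtain a b where az: "inner a z < b" and aD: "\<forall>x\<in>closure D. b < inner a x"
    using separating_hyperplane_closed_point[OF _ closed_closure z] by blast
  have b: "b < 0"
    using aD convex_cone_contains_0[OF D] closure_subset by fastforce
  have "0 \<le> inner a d" if "d \<in> D" for d
  proof (rule ccontr)
    assume neg: "\<not> 0 \<le> inner a d"
    have "(b / inner a d) *\<^sub>R d \<in> D"
      using convex_cone_scaleR[OF D _ that] neg b by (simp add: divide_nonpos_neg)
    then have "b < inner a ((b / inner a d) *\<^sub>R d)"
      using aD closure_subset by blast
    then show False
      using neg by simp
  qed
  with az b show ?thesis
    by (intro exI[of _ a]) auto
qed

lemma convex_cone_above_linear_graph:
  fixes D :: "('a::euclidean_space \<times> real) set"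
  assumes "convex_cone D" "(0, -1) \<notin> closure D"
  obtains g where "linear g" "\<And>y s. (y, s) \<in> D \<Longrightarrow> g y \<le> s"
proof -
  obtain a where a0: "inner a (0, -1) < 0" and aD: "\<forall>d\<in>D. 0 \<le> inner a d"
    using convex_cone_separating_functional[OF assms] by blast
  obtain h c where a: "a = (h, c)"
    by fastforce
  have c: "0 < c"
    using a0 by (simp add: a)
  define g where "g y = - inner h y / c" for y
  have "linear g"
    by (rule linearI) (simp_all add: g_def inner_add_right inner_scaleR_right diff_divide_distrib)
  moreover have "g y \<le> s" if "(y, s) \<in> D" for y s
  proof -
    have "0 \<le> inner h y + c * s"
      using aD that by (force simp: a)
    then show ?thesis
      using c by (simp add: g_def field_simps)
  qed
  ultimately show ?thesis
    using that by blast
qed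

lemma convex_cone_sum_order_interval:
  assumes P: "convex_cone P" and "finite I"
    and X: "\<And>m. m \<in> I \<Longrightarrow> X m \<in> P" "\<And>m. m \<in> I \<Longrightarrow> T *\<^sub>R e - X m \<in> P"
  shows "(\<Sum>m\<in>I. r m *\<^sub>R X m) + (T * (\<Sum>m\<in>I. \<bar>r m\<bar>)) *\<^sub>R e \<in> P"
  using \<open>finite I\<close> X
proof (induction I rule: finite_induct)
  case empty
  then show ?case
    using convex_cone_contains_0[OF P] by simp
next
  case (insert x F)
  have "r x *\<^sub>R X x + (T * \<bar>r x\<bar>) *\<^sub>R e \<in> P"
  proof (cases "0 \<le> r x")
    case True
    have "r x *\<^sub>R X x + (T * \<bar>r x\<bar>) *\<^sub>R e = r x *\<^sub>R (X x + (X x + (T *\<^sub>R e - X x)))"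
      using True by (simp add: algebra_simps)
    also have "\<dots> \<in> P"
      by (intro convex_cone_scaleR[OF P True] convex_cone_add[OF P] insert.prems) simp_all
    finally show ?thesis .
  next
    case False
    have "r x *\<^sub>R X x + (T * \<bar>r x\<bar>) *\<^sub>R e = (- r x) *\<^sub>R (T *\<^sub>R e - X x)"
      using False by (simp add: algebra_simps)
    also have "\<dots> \<in> P"
      using False by (intro convex_cone_scaleR[OF P] insert.prems) simp_all
    finally show ?thesis .
  qed
  moreover have "(\<Sum>m\<in>F. r m *\<^sub>R X m) + (T * (\<Sum>m\<in>F. \<bar>r m\<bar>)) *\<^sub>R e \<in> P"
    using insert.IH insert.prems by blast
  moreover have "(\<Sum>m\<in>insert x F. r m *\<^sub>R X m) + (T * (\<Sum>m\<in>insert x F. \<bar>r m\<bar>)) *\<^sub>R e =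
      (r x *\<^sub>R X x + (T * \<bar>r x\<bar>) *\<^sub>R e) + ((\<Sum>m\<in>F. r m *\<^sub>R X m) + (T * (\<Sum>m\<in>F. \<bar>r m\<bar>)) *\<^sub>R e)"
    using insert.hyps by (simp add: algebra_simps)
  ultimately show ?case
    using convex_cone_add[OF P] by metis
qed

text \<open>The M. Riesz extension theorem in finite dimension. R is a linear relation, which
  nonnegativity on P forces to be the graph of a functional; e is an order unit of P in S.\<close>

locale riesz_extension =
  fixes P S :: "'a::euclidean_space set" and R :: "('a \<times> real) set"
    and e :: 'a and r M :: real
  assumes convex_cone_P: "convex_cone P"
    and subspace_S: "subspace S" and P_subset: "P \<subseteq> S" and R_subset: "fst ` R \<subseteq> S"
    and subspace_R: "subspace R" and unit_R: "(e, r) \<in> R" and unit_P: "e \<in> P"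
    and order_unit: "0 \<le> M" "\<And>y. y \<in> S \<Longrightarrow> y + (M * norm y) *\<^sub>R e \<in> P"
    and nonneg: "\<And>x s. (x, s) \<in> R \<Longrightarrow> x \<in> P \<Longrightarrow> 0 \<le> s"
begin

definition lower_cone :: "('a \<times> real) set" where
  "lower_cone = (\<lambda>((x, s), p). (x - p, s)) ` (R \<times> P)"

lemma mem_lower_cone: "(x, s) \<in> R \<Longrightarrow> p \<in> P \<Longrightarrow> (x - p, s) \<in> lower_cone"
  unfolding lower_cone_def by (rule image_eqI[of _ _ "((x, s), p)"]) simp_all

lemma convex_cone_lower_cone: "convex_cone lower_cone"
proof -
  have "linear (\<lambda>((x, s), p). (x - p, s) :: 'a \<times> real)"
    by (rule linearI) (auto simp: algebra_simps split: prod.splits)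
  then show ?thesis
    unfolding lower_cone_def
    by (intro convex_cone_linear_image conjI convex_cone_Times subspace_imp_convex_cone subspace_R
        convex_cone_P)
qed

lemma minus_unit_notin_closure: "(0, -1) \<notin> closure lower_cone"
proof
  assume "(0, -1) \<in> closure lower_cone"
  have Mr: "0 \<le> M * r"
    using order_unit(1) nonneg[OF unit_R unit_P] by simp
  define \<epsilon> where "\<epsilon> = 1 / (1 + M * r)"
  have "0 < \<epsilon>"
    using Mr by (simp add: \<epsilon>_def)
  then obtain d where "d \<in> lower_cone" and d: "dist d (0, -1) < \<epsilon>"
    using \<open>(0, -1) \<in> closure lower_cone\<close> unfolding closure_approachable by blast
  then obtain x s p where xsp: "d = (x - p, s)" "(x, s) \<in> R" "p \<in> P"
    unfolding lower_cone_def by auto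
  define t where "t = M * norm (x - p)"
  have "x - p \<in> S"
    using subspace_diff[OF subspace_S] xsp P_subset R_subset by force
  then have "p + ((x - p) + t *\<^sub>R e) \<in> P"
    unfolding t_def by (intro convex_cone_add[OF convex_cone_P xsp(3)] order_unit(2))
  then have "0 \<le> s + t * r"
    using nonneg subspace_add[OF subspace_R xsp(2) subspace_scale[OF subspace_R unit_R, of t]] by simp
  moreover have "norm (x - p) < \<epsilon>" and s: "\<bar>s + 1\<bar> < \<epsilon>"
    using dist_fst_le[of d "(0, -1)"] dist_snd_le[of d "(0, -1)"] d
    by (simp_all add: xsp dist_norm dist_real_def)
  then have "norm (x - p) * (M * r) \<le> \<epsilon> * (M * r)"
    using Mr by (intro mult_right_mono) simp_all
  then have "t * r \<le> \<epsilon> * (M * r)"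
    by (simp add: t_def mult_ac)
  ultimately have "1 < \<epsilon> * (1 + M * r)"
    using s by (simp add: algebra_simps)
  then show False
    using Mr by (simp add: \<epsilon>_def)
qed

theorem exists_positive_extension: "\<exists>g. linear g \<and> (\<forall>(x, s)\<in>R. g x = s) \<and> (\<forall>p\<in>P. 0 \<le> g p)"
proof -
  obtain g where g: "linear g" "\<And>y s. (y, s) \<in> lower_cone \<Longrightarrow> g y \<le> s"
    using convex_cone_above_linear_graph[OF convex_cone_lower_cone minus_unit_notin_closure] by blast
  have "g x = s" if "(x, s) \<in> R" for x s
  proof -
    have "g (x - 0) \<le> s" "g (- x - 0) \<le> - s"
      using g(2) mem_lower_cone that subspace_neg[OF subspace_R that]
        convex_cone_contains_0[OF convex_cone_P] by force+
    then show ?thesis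
      using linear_neg[OF g(1)] by simp
  qed
  moreover have "0 \<le> g p" if "p \<in> P" for p
  proof -
    have "(0, 0) \<in> R"
      using subspace_0[OF subspace_R] by (simp add: zero_prod_def)
    then have "g (0 - p) \<le> 0"
      using g(2) mem_lower_cone that by blast
    then show ?thesis
      using linear_neg[OF g(1)] by simp
  qed
  ultimately show ?thesis
    using g(1) by blast
qed

end


section \<open>Matrix calculus\<close>

lemma smat_nth [simp]: "smat c A $ i $ j = c * A $ i $ j"
  by (simp add: smat_def)

lemma mc_adj_nth [simp]: "mc_adj A $ i $ j = cnj (A $ j $ i)"
  by (simp add: mc_adj_def)

lemma kron_nth [simp]: "kron a b $ p $ q = a $ fst p $ fst q * b $ snd p $ snd q"
  by (simp add: kron_def)

lemma scaleR_cmat_nth [simp]: "(r *\<^sub>R A) $ i $ j = of_real r * (A $ i $ j :: complex)"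
  unfolding vector_scaleR_component by (simp add: scaleR_conv_of_real)

lemma smat_of_real: "smat (of_real r) A = r *\<^sub>R A"
  by (simp add: vec_eq_iff del: vector_scaleR_component)

lemma smat_zero [simp]: "smat 0 A = 0"
  by (simp add: vec_eq_iff)

lemma smat_one [simp]: "smat 1 A = A"
  by (simp add: vec_eq_iff)

lemma smat_minus_one: "smat (-1) A = - A"
  by (simp add: vec_eq_iff)

lemma smat_add: "smat c (A + B) = smat c A + smat c B"
  by (simp add: vec_eq_iff algebra_simps)

lemma smat_smat: "smat c (smat d A) = smat (c * d) A"
  by (simp add: vec_eq_iff algebra_simps)

lemma smat_sum: "smat c (sum f S) = (\<Sum>i\<in>S. smat c (f i))"
  by (simp add: vec_eq_iff sum_distrib_left)

lemma mc_adj_zero [simp]: "mc_adj 0 = 0"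
  by (simp add: vec_eq_iff)

lemma mc_adj_add: "mc_adj (x + y) = mc_adj x + mc_adj y"
  by (simp add: vec_eq_iff)

lemma mc_adj_diff: "mc_adj (x - y) = mc_adj x - mc_adj y"
  by (simp add: vec_eq_iff)

lemma mc_adj_scaleR: "mc_adj (r *\<^sub>R x) = r *\<^sub>R mc_adj x"
  by (simp add: vec_eq_iff)

lemma mc_adj_smat: "mc_adj (smat c x) = smat (cnj c) (mc_adj x)"
  by (simp add: vec_eq_iff)

lemma mc_adj_kron: "mc_adj (kron a b) = kron (mc_adj a) (mc_adj b)"
  by (simp add: vec_eq_iff)

lemma mc_adj_sum: "mc_adj (sum f S) = (\<Sum>i\<in>S. mc_adj (f i))"
  by (simp add: vec_eq_iff)

lemma subspace_self_adjoint: "subspace {x :: 'n::finite cmat. mc_adj x = x}"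
  by (auto simp: subspace_def vec_eq_iff)

lemma kron_add_left: "kron (A + B) Q = kron A Q + kron B Q"
  by (simp add: vec_eq_iff algebra_simps)

lemma kron_smat_left: "kron (smat c a) b = smat c (kron a b)"
  by (simp add: vec_eq_iff mult.assoc)

lemma kron_mat_one: "kron (mat 1) (mat 1) = (mat 1 :: ('n::finite \<times> 'k::finite) cmat)"
  by (auto simp: vec_eq_iff mat_def prod_eq_iff)

definition matrix_unit :: "'k::finite \<Rightarrow> 'k \<Rightarrow> 'k cmat" where
  "matrix_unit k l = (\<chi> r s. if r = k \<and> s = l then 1 else 0)"

lemma matrix_unit_nth [simp]: "matrix_unit k l $ r $ s = (if r = k \<and> s = l then 1 else 0)"
  by (simp add: matrix_unit_def)

lemma if_zero_times:
  "(if P then a else 0) * b = (if P then a * b else (0::complex))"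
  "b * (if P then a else 0) = (if P then b * a else (0::complex))"
  by auto

lemma sum_sum_delta:
  "(\<Sum>k\<in>UNIV. \<Sum>l\<in>UNIV. if k = a \<and> l = b then f k l else 0) = (f a b :: complex)"
  for a :: "'a::finite" and b :: "'b::finite"
proof -
  have "(\<Sum>l\<in>UNIV. if k = a \<and> l = b then f k l else 0) = (if k = a then f k b else 0)" for k
    by (cases "k = a") (simp_all add: sum.delta)
  then show ?thesis
    by (simp add: sum.delta)
qed

lemma sum_sum_delta':
  "(\<Sum>k\<in>UNIV. \<Sum>l\<in>UNIV. if a = k \<and> b = l then f k l else 0) = (f a b :: complex)"
  for a :: "'a::finite" and b :: "'b::finite"
  using sum_sum_delta[of a b f] by (simp add: eq_commute[of a] eq_commute[of b])

lemma mtr_mult_transpose: "mtr (M ** transpose b) = (\<Sum>k\<in>UNIV. \<Sum>l\<in>UNIV. M $ k $ l * b $ k $ l)"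
  by (simp add: mtr_def matrix_matrix_mult_def transpose_def)

lemma mtr_mult_transpose_matrix_unit: "mtr (M ** transpose (matrix_unit k l)) = M $ k $ l"
  by (simp add: mtr_mult_transpose if_zero_times sum_sum_delta cong: if_cong)

lemma kron_matrix_unit_expansion:
  "kron a b = (\<Sum>k\<in>UNIV. \<Sum>l\<in>UNIV. smat (b $ k $ l) (kron a (matrix_unit k l)))"
proof -
  have "(\<Sum>k\<in>UNIV. \<Sum>l\<in>UNIV. smat (b $ k $ l) (kron a (matrix_unit k l))) $ p $ q
      = kron a b $ p $ q" for p q
    by (simp add: if_zero_times sum_sum_delta' mult.commute cong: if_cong)
  then show ?thesis
    by (simp add: vec_eq_iff)
qed

definition block :: "('n::finite \<times> 'k::finite) cmat \<Rightarrow> 'n \<Rightarrow> 'n \<Rightarrow> 'k cmat" where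
  "block x i j = (\<chi> k l. x $ (i, k) $ (j, l))"

lemma id_tensor_nth: "id_tensor \<alpha> x $ p $ q = \<alpha> (block x (fst p) (fst q)) $ snd p $ snd q"
  by (simp add: id_tensor_def block_def)

lemma block_add: "block (x + y) i j = block x i j + block y i j"
  by (simp add: block_def vec_eq_iff)

lemma block_scaleR: "block (r *\<^sub>R x) i j = r *\<^sub>R block x i j"
  by (simp add: block_def vec_eq_iff)

lemma block_kron: "block (kron a b) i j = smat (a $ i $ j) b"
  by (simp add: block_def vec_eq_iff)

lemma clinear_on_UNIV_add: "clinear_on UNIV \<alpha> \<Longrightarrow> \<alpha> (a + b) = \<alpha> a + \<alpha> b"
  by (simp add: clinear_on_def)

lemma clinear_on_UNIV_smat: "clinear_on UNIV \<alpha> \<Longrightarrow> \<alpha> (smat c a) = smat c (\<alpha> a)"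
  by (simp add: clinear_on_def)

lemma clinear_on_UNIV_scaleR: "clinear_on UNIV \<alpha> \<Longrightarrow> \<alpha> (r *\<^sub>R a) = r *\<^sub>R \<alpha> a"
  using clinear_on_UNIV_smat[of \<alpha> "of_real r" a] by (simp add: smat_of_real)

lemma id_tensor_add:
  "clinear_on UNIV \<alpha> \<Longrightarrow> id_tensor \<alpha> (x + y) = id_tensor \<alpha> x + id_tensor \<alpha> y"
  by (simp add: vec_eq_iff id_tensor_nth block_add clinear_on_UNIV_add)

lemma id_tensor_scaleR:
  "clinear_on UNIV \<alpha> \<Longrightarrow> id_tensor \<alpha> (r *\<^sub>R x) = r *\<^sub>R id_tensor \<alpha> x"
  by (simp add: vec_eq_iff id_tensor_nth block_scaleR clinear_on_UNIV_scaleR del: scaleR_cmat_nth)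

lemma id_tensor_kron: "clinear_on UNIV \<alpha> \<Longrightarrow> id_tensor \<alpha> (kron a b) = kron a (\<alpha> b)"
  by (simp add: vec_eq_iff id_tensor_nth block_kron clinear_on_UNIV_smat)

lemma self_adjoint_real_combination:
  assumes "mc_adj y = y" "y = (\<Sum>m\<in>I. smat (c m) (X m))" "\<And>m. m \<in> I \<Longrightarrow> mc_adj (X m) = X m"
  shows "y = (\<Sum>m\<in>I. Re (c m) *\<^sub>R X m)"
proof -
  have "2 *\<^sub>R y = y + mc_adj y"
    using assms(1) by (simp add: scaleR_2)
  also have "\<dots> = (\<Sum>m\<in>I. smat (c m + cnj (c m)) (X m))"
    by (subst (1 2) assms(2)) (simp add: mc_adj_sum mc_adj_smat assms(3) vec_eq_iff sum.distrib[symmetric]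
        algebra_simps)
  also have "\<dots> = 2 *\<^sub>R (\<Sum>m\<in>I. Re (c m) *\<^sub>R X m)"
    by (simp add: complex_add_cnj scaleR_sum_right smat_of_real[symmetric] smat_smat smat_sum)
  finally show ?thesis
    by simp
qed

section \<open>Positive semidefinite matrices\<close>

definition quad_form :: "'n::finite cmat \<Rightarrow> complex^'n \<Rightarrow> complex" where
  "quad_form A x = (\<Sum>i\<in>UNIV. cnj (x $ i) * (A *v x) $ i)"

lemma cpsd_iff_quad_form: "cpsd A \<longleftrightarrow> (\<forall>x. Im (quad_form A x) = 0 \<and> 0 \<le> Re (quad_form A x))"
  by (simp add: cpsd_def quad_form_def Let_def)

lemma quad_form_expand: "quad_form A x = (\<Sum>i\<in>UNIV. \<Sum>j\<in>UNIV. cnj (x $ i) * A $ i $ j * x $ j)"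
  by (simp add: quad_form_def matrix_vector_mult_def sum_distrib_left mult.assoc)

lemma quad_form_add: "quad_form (A + B) x = quad_form A x + quad_form B x"
  by (simp add: quad_form_expand algebra_simps sum.distrib)

lemma quad_form_scaleR: "quad_form (r *\<^sub>R A) x = of_real r * quad_form A x"
  by (simp add: quad_form_expand sum_distrib_left algebra_simps del: vector_scaleR_component)

lemma cpsd_add: "cpsd A \<Longrightarrow> cpsd B \<Longrightarrow> cpsd (A + B)"
  by (simp add: cpsd_iff_quad_form quad_form_add)

lemma cpsd_scaleR: "cpsd A \<Longrightarrow> 0 \<le> r \<Longrightarrow> cpsd (r *\<^sub>R A)"
  by (simp add: cpsd_iff_quad_form quad_form_scaleR)

lemma cpsd_zero: "cpsd 0"
  by (simp add: cpsd_iff_quad_form quad_form_expand)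

definition outer :: "complex^'n::finite \<Rightarrow> 'n cmat" where
  "outer z = (\<chi> i j. z $ i * cnj (z $ j))"

definition diagm :: "('n::finite \<Rightarrow> real) \<Rightarrow> 'n cmat" where
  "diagm d = (\<chi> i j. if i = j then of_real (d i) else 0)"

lemma outer_nth [simp]: "outer z $ i $ j = z $ i * cnj (z $ j)"
  by (simp add: outer_def)

lemma diagm_nth [simp]: "diagm d $ i $ j = (if i = j then of_real (d i) else 0)"
  by (simp add: diagm_def)

lemma mc_adj_outer: "mc_adj (outer z) = outer z"
  by (simp add: vec_eq_iff)

lemma mc_adj_diagm: "mc_adj (diagm d) = diagm d"
  by (simp add: vec_eq_iff)

lemma mat_one_eq_diagm: "mat 1 = diagm (\<lambda>_. 1)"
  by (simp add: vec_eq_iff mat_def)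

lemma mc_adj_mat_one: "mc_adj (mat 1) = mat 1"
  by (simp add: mat_one_eq_diagm mc_adj_diagm)

lemma quad_form_outer:
  "quad_form (outer z) x = cnj (\<Sum>j\<in>UNIV. cnj (z $ j) * x $ j) * (\<Sum>j\<in>UNIV. cnj (z $ j) * x $ j)"
  by (simp add: quad_form_expand sum_product mult_ac) (rule sum.swap)

lemma cpsd_outer: "cpsd (outer z)"
proof -
  have sq: "cnj w * w = of_real ((Re w)\<^sup>2 + (Im w)\<^sup>2)" for w :: complex
    using complex_mult_cnj[of w] by (simp add: mult.commute)
  show ?thesis
    unfolding cpsd_iff_quad_form quad_form_outer sq by simp
qed

lemma cpsd_diagm:
  assumes "\<And>i. 0 \<le> d i"
  shows "cpsd (diagm d)"
proof -
  have "quad_form (diagm d) x = (\<Sum>i\<in>UNIV. of_real (d i) * (cnj (x $ i) * x $ i))" for x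
    unfolding quad_form_expand by (intro sum.cong refl) (simp add: if_zero_times sum.delta cong: if_cong)
  then show ?thesis
    using assms unfolding cpsd_iff_quad_form
    by (auto intro!: sum_nonneg mult_nonneg_nonneg[OF _ add_nonneg_nonneg] simp: Im_sum Re_sum)
qed

lemma sum_UNIV_prod:
  "(\<Sum>p\<in>(UNIV::('a::finite \<times> 'b::finite) set). f p) = (\<Sum>i\<in>UNIV. \<Sum>k\<in>UNIV. f (i, k))"
  unfolding sum.cartesian_product UNIV_Times_UNIV by simp

text \<open>For diagonal or rank-one a, the quadratic form of a \<otimes> Q is a nonnegative combination of
  quadratic forms of Q; these two cases suffice and avoid the spectral theorem.\<close>

lemma quad_form_kron_diagm:
  "quad_form (kron (diagm d) Q) x = (\<Sum>i\<in>UNIV. of_real (d i) * quad_form Q (\<chi> k. x $ (i, k)))"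
proof -
  have delta: "(\<Sum>j\<in>UNIV. \<Sum>l\<in>UNIV. (if i = j then a else 0) * f j l) = (\<Sum>l\<in>UNIV. a * f i l)"
    for a :: complex and i :: 'a and f
  proof -
    have "(\<Sum>j\<in>UNIV. \<Sum>l\<in>UNIV. (if i = j then a else 0) * f j l)
        = (\<Sum>j\<in>UNIV. if i = j then a * (\<Sum>l\<in>UNIV. f j l) else 0)"
      by (intro sum.cong refl) (simp add: sum_distrib_left)
    then show ?thesis
      by (simp add: sum.delta' sum_distrib_left)
  qed
  have "quad_form (kron (diagm d) Q) x = (\<Sum>i\<in>UNIV. \<Sum>k\<in>UNIV. \<Sum>j\<in>UNIV. \<Sum>l\<in>UNIV.
      (if i = j then of_real (d i) else 0) * (cnj (x $ (i, k)) * Q $ k $ l * x $ (j, l)))"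
    by (simp add: quad_form_expand sum_UNIV_prod mult_ac cong: if_cong)
  also have "\<dots> = (\<Sum>i\<in>UNIV. \<Sum>k\<in>UNIV. \<Sum>l\<in>UNIV.
      of_real (d i) * (cnj (x $ (i, k)) * Q $ k $ l * x $ (i, l)))"
    by (simp only: delta)
  also have "\<dots> = (\<Sum>i\<in>UNIV. of_real (d i) * quad_form Q (\<chi> k. x $ (i, k)))"
    by (simp add: quad_form_expand sum_distrib_left mult_ac)
  finally show ?thesis .
qed

lemma cpsd_kron_diagm:
  assumes "\<And>i. 0 \<le> d i" "cpsd Q"
  shows "cpsd (kron (diagm d) Q)"
  using assms unfolding cpsd_iff_quad_form quad_form_kron_diagm
  by (auto intro!: sum_nonneg mult_nonneg_nonneg simp: Re_sum Im_sum)

lemma quad_form_kron_outer: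
  "quad_form (kron (outer z) Q) x = quad_form Q (\<chi> k. \<Sum>i\<in>UNIV. cnj (z $ i) * x $ (i, k))"
proof -
  have "quad_form (kron (outer z) Q) x = (\<Sum>i\<in>UNIV. \<Sum>k\<in>UNIV. \<Sum>j\<in>UNIV. \<Sum>l\<in>UNIV.
      cnj (x $ (i, k)) * z $ i * cnj (z $ j) * Q $ k $ l * x $ (j, l))"
    by (simp add: quad_form_expand sum_UNIV_prod mult_ac)
  also have "\<dots> = (\<Sum>k\<in>UNIV. \<Sum>i\<in>UNIV. \<Sum>l\<in>UNIV. \<Sum>j\<in>UNIV.
      cnj (x $ (i, k)) * z $ i * cnj (z $ j) * Q $ k $ l * x $ (j, l))"
    by (rule trans[OF sum.swap], intro sum.cong refl, rule sum.swap)
  also have "\<dots> = (\<Sum>k\<in>UNIV. \<Sum>l\<in>UNIV. \<Sum>i\<in>UNIV. \<Sum>j\<in>UNIV.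
      cnj (x $ (i, k)) * z $ i * cnj (z $ j) * Q $ k $ l * x $ (j, l))"
    by (rule sum.cong[OF refl], rule sum.swap)
  also have "\<dots> = quad_form Q (\<chi> k. \<Sum>i\<in>UNIV. cnj (z $ i) * x $ (i, k))"
    by (simp add: quad_form_expand sum_distrib_left sum_distrib_right mult_ac)
  finally show ?thesis .
qed

lemma cpsd_kron_outer: "cpsd Q \<Longrightarrow> cpsd (kron (outer z) Q)"
  unfolding cpsd_iff_quad_form quad_form_kron_outer by simp

section \<open>The cone P(B(H), C) and its order unit\<close>

definition P_cone :: "('k::finite cmat \<Rightarrow> 'k cmat) set \<Rightarrow> ('n::finite \<times> 'k) cmat set" where
  "P_cone C = {x. mc_adj x = x \<and> (\<forall>\<alpha>\<in>C. cpsd (id_tensor \<alpha> x))}"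

lemma P_set_eq: "P_set A C = tensor_space A \<inter> P_cone C"
  by (auto simp: P_set_def P_cone_def)

lemma P_cone_self_adjoint: "P_cone C \<subseteq> {x. mc_adj x = x}"
  by (auto simp: P_cone_def)

lemma convex_cone_P_cone:
  assumes "\<forall>\<alpha>\<in>C. positive_map \<alpha>"
  shows "convex_cone (P_cone C)"
proof -
  have lin: "clinear_on UNIV \<alpha>" if "\<alpha> \<in> C" for \<alpha>
    using assms that by (simp add: positive_map_def)
  have zero: "id_tensor \<alpha> 0 = 0" if "\<alpha> \<in> C" for \<alpha>
    using id_tensor_scaleR[OF lin[OF that], of 0 0] by simp
  show ?thesis
    unfolding convex_cone_iff P_cone_def
    by (auto simp: mc_adj_add mc_adj_scaleR id_tensor_add[OF lin] id_tensor_scaleR[OF lin] zero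
        cpsd_zero cpsd_add cpsd_scaleR)
qed

lemma kron_mem_P_cone:
  fixes a :: "'n::finite cmat" and b :: "'k::finite cmat"
  assumes "\<forall>\<alpha>\<in>C. positive_map \<alpha>" and a: "mc_adj a = a"
    and kron_cpsd: "\<And>Q :: 'k cmat. cpsd Q \<Longrightarrow> cpsd (kron a Q)"
    and b: "cpsd b" "mc_adj b = b"
  shows "kron a b \<in> P_cone C"
proof -
  have "cpsd (id_tensor \<alpha> (kron a b))" if "\<alpha> \<in> C" for \<alpha>
  proof -
    have "clinear_on UNIV \<alpha>" "cpsd (\<alpha> b)"
      using assms(1) that b(1) by (simp_all add: positive_map_def)
    then show ?thesis
      by (simp add: id_tensor_kron kron_cpsd)
  qed
  then show ?thesis
    by (simp add: P_cone_def mc_adj_kron a b)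
qed

definition basis_comb :: "complex \<Rightarrow> 'n::finite \<Rightarrow> 'n \<Rightarrow> complex^'n" where
  "basis_comb c i j = (\<chi> m. (if m = i then 1 else 0) + c * (if m = j then 1 else 0))"

lemma basis_comb_nth [simp]:
  "basis_comb c i j $ m = (if m = i then 1 else 0) + c * (if m = j then 1 else 0)"
  by (simp add: basis_comb_def)

lemma outer_basis_comb_polarization:
  "(\<Sum>s<4. (\<i> ^ s / 4) * (basis_comb (\<i> ^ s) i j $ a * cnj (basis_comb (\<i> ^ s) i j $ b)))
    = (if a = i \<and> b = j then 1 else 0)"
proof -
  have "{..<4::nat} = {0, 1, 2, 3}"
    by auto
  moreover have "\<i> ^ 3 = - \<i>"
    by (simp add: power3_eq_cube)
  ultimately show ?thesis
    by (cases "a = i"; cases "a = j"; cases "b = i"; cases "b = j") (simp_all add: field_simps)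
qed

lemma diagm_minus_outer_basis_comb:
  assumes "cnj c * c = 1"
  shows "diagm (\<lambda>_. 4) - outer (basis_comb c i j)
    = diagm (\<lambda>m. 4 - (if m = i then 2 else 0) - (if m = j then 2 else 0))
      + outer (basis_comb (- c) i j)"
proof -
  have "c * cnj c = 1"
    using assms by (simp add: mult.commute)
  then show ?thesis
    using assms unfolding vec_eq_iff
    by (intro allI, case_tac "x = xa"; cases "x = i"; cases "x = j"; cases "xa = i"; cases "xa = j")
      (simp_all add: algebra_simps)
qed

lemma mc_adj_diagm_minus_outer: "mc_adj (diagm d - outer z) = diagm d - outer z"
  by (simp add: mc_adj_diff mc_adj_diagm mc_adj_outer)

lemma cpsd_kron_diagm_minus_outer_basis_comb:
  assumes "cnj c * c = 1" "cpsd Q"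
  shows "cpsd (kron (diagm (\<lambda>_. 4) - outer (basis_comb c i j)) Q)"
  unfolding diagm_minus_outer_basis_comb[OF assms(1)] kron_add_left
  by (intro cpsd_add cpsd_kron_diagm cpsd_kron_outer assms(2)) auto

lemma cpsd_diagm_minus_outer_basis_comb:
  assumes "cnj c * c = 1"
  shows "cpsd (diagm (\<lambda>_. 4) - outer (basis_comb c i j))"
  unfolding diagm_minus_outer_basis_comb[OF assms] by (intro cpsd_add cpsd_diagm cpsd_outer) auto

lemma cnj_mult_power_ii: "cnj (\<i> ^ s) * \<i> ^ s = 1"
proof -
  have "(- \<i>) ^ s * \<i> ^ s = (- \<i> * \<i>) ^ s"
    by (simp only: power_mult_distrib)
  then show ?thesis
    by simp
qed

text \<open>The index m = (p, q, s, t) stands for the tensor product of the rank-one projections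
  onto e_(fst p) + i^s e_(fst q) and e_(snd p) + i^t e_(snd q); by polarization in each
  factor, the matrix unit E_pq is the combination of these with coefficients i^s i^t / 16.\<close>

type_synonym ('n, 'k) polar_idx = "('n \<times> 'k) \<times> ('n \<times> 'k) \<times> nat \<times> nat"

definition polar_index :: "('n::finite, 'k::finite) polar_idx set" where
  "polar_index = UNIV \<times> UNIV \<times> {..<4} \<times> {..<4}"

definition polar_tensor :: "('n::finite, 'k::finite) polar_idx \<Rightarrow> ('n \<times> 'k) cmat" where
  "polar_tensor m = (case m of (p, q, s, t) \<Rightarrow>
     kron (outer (basis_comb (\<i> ^ s) (fst p) (fst q)))
       (outer (basis_comb (\<i> ^ t) (snd p) (snd q))))"

definition polar_coeff :: "('n::finite \<times> 'k::finite) cmat \<Rightarrow> ('n, 'k) polar_idx \<Rightarrow> complex" where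
  "polar_coeff y m = (case m of (p, q, s, t) \<Rightarrow> y $ p $ q * (\<i> ^ s / 4) * (\<i> ^ t / 4))"

lemma finite_polar_index: "finite polar_index"
  by (simp add: polar_index_def)

lemma sum_Times_nested: "sum f (A \<times> B) = (\<Sum>a\<in>A. \<Sum>b\<in>B. f (a, b))"
  by (simp add: sum.cartesian_product)

lemma polar_decomposition: "y = (\<Sum>m\<in>polar_index. smat (polar_coeff y m) (polar_tensor m))"
proof -
  let ?pol = "\<lambda>i j a b. \<Sum>s<4.
    (\<i> ^ s / 4) * (basis_comb (\<i> ^ s) i j $ a * cnj (basis_comb (\<i> ^ s) i j $ b))"
  have "(\<Sum>m\<in>polar_index. smat (polar_coeff y m) (polar_tensor m)) $ a $ b = y $ a $ b" for a b
  proof -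
    have "(\<Sum>m\<in>polar_index. smat (polar_coeff y m) (polar_tensor m)) $ a $ b =
      (\<Sum>p\<in>UNIV. \<Sum>q\<in>UNIV. \<Sum>s<4. \<Sum>t<4. y $ p $ q *
        (((\<i> ^ s / 4) * (basis_comb (\<i> ^ s) (fst p) (fst q) $ fst a
            * cnj (basis_comb (\<i> ^ s) (fst p) (fst q) $ fst b))) *
         ((\<i> ^ t / 4) * (basis_comb (\<i> ^ t) (snd p) (snd q) $ snd a
            * cnj (basis_comb (\<i> ^ t) (snd p) (snd q) $ snd b)))))"
      by (simp add: polar_index_def sum_Times_nested polar_tensor_def polar_coeff_def mult_ac
          del: basis_comb_nth)
    also have "\<dots> = (\<Sum>p\<in>UNIV. \<Sum>q\<in>UNIV. y $ p $ q *
        (?pol (fst p) (fst q) (fst a) (fst b) * ?pol (snd p) (snd q) (snd a) (snd b)))"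
      by (simp only: sum_product, simp only: sum_distrib_left)
    also have "\<dots> = (\<Sum>p\<in>UNIV. \<Sum>q\<in>UNIV. y $ p $ q *
        ((if fst a = fst p \<and> fst b = fst q then 1 else 0)
          * (if snd a = snd p \<and> snd b = snd q then 1 else 0)))"
      by (simp only: outer_basis_comb_polarization)
    also have "\<dots> = (\<Sum>p\<in>UNIV. \<Sum>q\<in>UNIV. if p = a \<and> q = b then y $ p $ q else 0)"
      by (intro sum.cong refl) (auto simp: prod_eq_iff)
    also have "\<dots> = y $ a $ b"
      by (rule sum_sum_delta)
    finally show ?thesis .
  qed
  then show ?thesis
    by (simp add: vec_eq_iff)
qed

lemma polar_coeff_bound: "\<bar>Re (polar_coeff y m)\<bar> \<le> norm y"
proof -
  obtain p q s t where m: "m = (p, q, s, t)"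
    by (cases m) auto
  have "\<bar>Re (polar_coeff y m)\<bar> \<le> norm (polar_coeff y m)"
    by (rule abs_Re_le_cmod)
  also have "\<dots> = norm (y $ p $ q) / 16"
    by (simp add: m polar_coeff_def norm_mult norm_divide norm_power)
  also have "\<dots> \<le> norm (y $ p $ q)"
    by simp
  also have "\<dots> \<le> norm (y $ p)"
    by (rule Finite_Cartesian_Product.norm_nth_le)
  also have "\<dots> \<le> norm y"
    by (rule Finite_Cartesian_Product.norm_nth_le)
  finally show ?thesis .
qed

lemma mc_adj_polar_tensor: "mc_adj (polar_tensor m) = polar_tensor m"
  by (cases m) (simp add: polar_tensor_def mc_adj_kron mc_adj_outer)

lemma kron_diff_kron: "kron D E - kron A B = kron (D - A) E + kron A (E - B)"
  by (simp add: vec_eq_iff algebra_simps)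

lemma sixteen_mat_one:
  "16 *\<^sub>R (mat 1 :: ('n::finite \<times> 'k::finite) cmat) = kron (diagm (\<lambda>_. 4)) (diagm (\<lambda>_. 4))"
  by (auto simp: vec_eq_iff mat_def prod_eq_iff scaleR_conv_of_real)

lemma mat_one_mem_P_cone:
  assumes "\<forall>\<alpha>\<in>C. positive_map \<alpha>"
  shows "(mat 1 :: ('n::finite \<times> 'k::finite) cmat) \<in> P_cone C"
proof -
  have "(mat 1 :: ('n \<times> 'k) cmat) = kron (diagm (\<lambda>_. 1)) (diagm (\<lambda>_. 1))"
    by (simp only: mat_one_eq_diagm[symmetric] kron_mat_one)
  also have "\<dots> \<in> P_cone C"
    by (intro kron_mem_P_cone assms cpsd_kron_diagm cpsd_diagm mc_adj_diagm) simp_all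
  finally show ?thesis .
qed

lemma polar_tensor_mem_P_cone:
  assumes "\<forall>\<alpha>\<in>C. positive_map \<alpha>"
  shows "polar_tensor m \<in> P_cone C"
  by (cases m)
    (auto simp: polar_tensor_def intro!: kron_mem_P_cone[OF assms] mc_adj_outer cpsd_kron_outer cpsd_outer)

lemma sixteen_minus_polar_tensor_mem_P_cone:
  assumes "\<forall>\<alpha>\<in>C. positive_map \<alpha>"
  shows "16 *\<^sub>R mat 1 - polar_tensor m \<in> P_cone C"
proof -
  obtain p q s t where m: "m = (p, q, s, t)"
    by (cases m) auto
  define z where "z = basis_comb (\<i> ^ s) (fst p) (fst q)"
  define w where "w = basis_comb (\<i> ^ t) (snd p) (snd q)"
  have "16 *\<^sub>R mat 1 - polar_tensor m
      = kron (diagm (\<lambda>_. 4) - outer z) (diagm (\<lambda>_. 4)) + kron (outer z) (diagm (\<lambda>_. 4) - outer w)"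
    unfolding m polar_tensor_def z_def w_def
    by (simp add: sixteen_mat_one kron_diff_kron)
  also have "\<dots> \<in> P_cone C"
  proof (intro convex_cone_add[OF convex_cone_P_cone[OF assms]] kron_mem_P_cone[OF assms])
    show "cpsd (kron (diagm (\<lambda>_. 4) - outer z) Q)" if "cpsd Q" for Q
      unfolding z_def using cnj_mult_power_ii that by (rule cpsd_kron_diagm_minus_outer_basis_comb)
    show "cpsd (diagm (\<lambda>_. 4) - outer w)"
      unfolding w_def by (rule cpsd_diagm_minus_outer_basis_comb[OF cnj_mult_power_ii])
    show "cpsd (kron (outer z) Q)" if "cpsd Q" for Q
      using that by (rule cpsd_kron_outer)
  qed (simp_all add: cpsd_diagm mc_adj_diagm mc_adj_outer mc_adj_diagm_minus_outer)
  finally show ?thesis .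
qed

lemma P_cone_order_unit:
  assumes posC: "\<forall>\<alpha>\<in>C. positive_map \<alpha>"
  obtains M where "0 \<le> M"
    and "\<And>y :: ('n::finite \<times> 'k::finite) cmat. mc_adj y = y \<Longrightarrow> y + (M * norm y) *\<^sub>R mat 1 \<in> P_cone C"
proof
  let ?N = "real (card (polar_index :: ('n, 'k) polar_idx set))"
  show "0 \<le> 16 * ?N"
    by simp
  fix y :: "('n \<times> 'k) cmat"
  assume "mc_adj y = y"
  then have y: "y = (\<Sum>m\<in>polar_index. Re (polar_coeff y m) *\<^sub>R polar_tensor m)"
    by (rule self_adjoint_real_combination[OF _ polar_decomposition mc_adj_polar_tensor])
  have A: "y + (16 * (\<Sum>m\<in>polar_index. \<bar>Re (polar_coeff y m)\<bar>)) *\<^sub>R mat 1 \<in> P_cone C"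
    by (subst y, rule convex_cone_sum_order_interval[OF convex_cone_P_cone[OF posC] finite_polar_index])
      (simp_all add: polar_tensor_mem_P_cone[OF posC] sixteen_minus_polar_tensor_mem_P_cone[OF posC])
  have "(\<Sum>m\<in>polar_index. \<bar>Re (polar_coeff y m)\<bar>) \<le> ?N * norm y"
    using sum_bounded_above[of polar_index "\<lambda>m. \<bar>Re (polar_coeff y m)\<bar>", OF polar_coeff_bound] by simp
  then have B: "(16 * ?N * norm y - 16 * (\<Sum>m\<in>polar_index. \<bar>Re (polar_coeff y m)\<bar>)) *\<^sub>R mat 1 \<in> P_cone C"
    by (intro convex_cone_scaleR[OF convex_cone_P_cone[OF posC]] mat_one_mem_P_cone[OF posC]) simp
  show "y + (16 * ?N * norm y) *\<^sub>R mat 1 \<in> P_cone C"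
    using convex_cone_add[OF convex_cone_P_cone[OF posC] A B] by (simp add: algebra_simps)
qed

section \<open>Representations of the dual functional\<close>

text \<open>The dual functional of \<phi> is only given through representations of its argument, so it
  is encoded as a relation.\<close>

definition dual_rep ::
    "'n::finite cmat set \<Rightarrow> ('n cmat \<Rightarrow> 'k::finite cmat) \<Rightarrow> ('n \<times> 'k) cmat \<Rightarrow> complex \<Rightarrow> bool" where
  "dual_rep B \<phi> x s \<longleftrightarrow> (\<exists>(m::nat) c a b. (\<forall>i<m. a i \<in> B) \<and>
      x = (\<Sum>i<m. smat (c i) (kron (a i) (b i))) \<and> s = (\<Sum>i<m. c i * mtr (\<phi> (a i) ** transpose (b i))))"

lemma sum_lessThan_add: "(\<Sum>i<m1 + m2. f i) = (\<Sum>i<m1. f i) + (\<Sum>i<m2. f (m1 + i))" for m1 m2 :: nat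
  by (induction m2) (simp_all add: add.assoc)

definition concat_seq :: "nat \<Rightarrow> (nat \<Rightarrow> 'a) \<Rightarrow> (nat \<Rightarrow> 'a) \<Rightarrow> nat \<Rightarrow> 'a" where
  "concat_seq m f g i = (if i < m then f i else g (i - m))"

lemma sum_concat_seq:
  "(\<Sum>i<m1 + m2. h (concat_seq m1 c1 c2 i) (concat_seq m1 a1 a2 i) (concat_seq m1 b1 b2 i)) =
   (\<Sum>i<m1. h (c1 i) (a1 i) (b1 i)) + (\<Sum>i<m2. h (c2 i) (a2 i) (b2 i))" for m1 m2 :: nat
  by (simp add: sum_lessThan_add concat_seq_def)

lemma dual_rep_add:
  assumes "dual_rep B \<phi> x s" "dual_rep B \<phi> y t"
  shows "dual_rep B \<phi> (x + y) (s + t)"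
proof -
  obtain m1 :: nat and c1 a1 b1 where 1: "\<forall>i<m1. a1 i \<in> B" "x = (\<Sum>i<m1. smat (c1 i) (kron (a1 i) (b1 i)))"
    "s = (\<Sum>i<m1. c1 i * mtr (\<phi> (a1 i) ** transpose (b1 i)))"
    using assms(1) unfolding dual_rep_def by blast
  obtain m2 :: nat and c2 a2 b2 where 2: "\<forall>i<m2. a2 i \<in> B" "y = (\<Sum>i<m2. smat (c2 i) (kron (a2 i) (b2 i)))"
    "t = (\<Sum>i<m2. c2 i * mtr (\<phi> (a2 i) ** transpose (b2 i)))"
    using assms(2) unfolding dual_rep_def by blast
  show ?thesis
    unfolding dual_rep_def
  proof (intro exI conjI)
    show "\<forall>i<m1 + m2. concat_seq m1 a1 a2 i \<in> B"
      using 1(1) 2(1) by (auto simp: concat_seq_def)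
    show "x + y = (\<Sum>i<m1 + m2.
        smat (concat_seq m1 c1 c2 i) (kron (concat_seq m1 a1 a2 i) (concat_seq m1 b1 b2 i)))"
      by (subst sum_concat_seq[where h = "\<lambda>c a b. smat c (kron a b)"]) (simp add: 1 2)
    show "s + t = (\<Sum>i<m1 + m2.
        concat_seq m1 c1 c2 i * mtr (\<phi> (concat_seq m1 a1 a2 i) ** transpose (concat_seq m1 b1 b2 i)))"
      by (subst sum_concat_seq[where h = "\<lambda>c a b. c * mtr (\<phi> a ** transpose b)"]) (simp add: 1 2)
  qed
qed

lemma dual_rep_smat:
  assumes "dual_rep B \<phi> x s"
  shows "dual_rep B \<phi> (smat d x) (d * s)"
proof -
  obtain m :: nat and c a b where 1: "\<forall>i<m. a i \<in> B" "x = (\<Sum>i<m. smat (c i) (kron (a i) (b i)))"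
    "s = (\<Sum>i<m. c i * mtr (\<phi> (a i) ** transpose (b i)))"
    using assms unfolding dual_rep_def by blast
  show ?thesis
    unfolding dual_rep_def
  proof (intro exI conjI)
    show "\<forall>i<m. a i \<in> B"
      by (rule 1(1))
    show "smat d x = (\<Sum>i<m. smat (d * c i) (kron (a i) (b i)))"
      by (simp add: 1 smat_sum smat_smat)
    show "d * s = (\<Sum>i<m. (d * c i) * mtr (\<phi> (a i) ** transpose (b i)))"
      by (simp add: 1 sum_distrib_left mult.assoc)
  qed
qed

lemma dual_rep_scaleR: "dual_rep B \<phi> x s \<Longrightarrow> dual_rep B \<phi> (r *\<^sub>R x) (of_real r * s)"
  using dual_rep_smat[of B \<phi> x s "of_real r"] by (simp add: smat_of_real)

lemma dual_rep_kron: "a \<in> B \<Longrightarrow> dual_rep B \<phi> (kron a b) (mtr (\<phi> a ** transpose b))"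
  unfolding dual_rep_def
  by (rule exI[of _ 1], rule exI[of _ "\<lambda>_. 1"], rule exI[of _ "\<lambda>_. a"], rule exI[of _ "\<lambda>_. b"]) simp

lemma dual_rep_zero: "dual_rep B \<phi> 0 0"
  unfolding dual_rep_def by (rule exI[of _ 0]) simp

lemma dual_rep_mc_adj:
  assumes "dual_rep B \<phi> x s" "\<forall>a\<in>B. mc_adj a \<in> B"
  obtains s' where "dual_rep B \<phi> (mc_adj x) s'"
proof -
  obtain m :: nat and c a b where 1: "\<forall>i<m. a i \<in> B" "x = (\<Sum>i<m. smat (c i) (kron (a i) (b i)))"
    using assms(1) unfolding dual_rep_def by blast
  have "dual_rep B \<phi> (mc_adj x) (\<Sum>i<m. cnj (c i) * mtr (\<phi> (mc_adj (a i)) ** transpose (mc_adj (b i))))"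
    unfolding dual_rep_def
  proof (intro exI conjI)
    show "\<forall>i<m. mc_adj (a i) \<in> B"
      using 1(1) assms(2) by auto
    show "mc_adj x = (\<Sum>i<m. smat (cnj (c i)) (kron (mc_adj (a i)) (mc_adj (b i))))"
      by (simp add: 1 mc_adj_sum mc_adj_smat mc_adj_kron)
  qed simp
  then show ?thesis
    using that by blast
qed

lemma dual_rep_nonneg:
  assumes "C_positive C B \<phi>" "dual_rep B \<phi> x s" "x \<in> P_cone C"
  shows "Im s = 0 \<and> 0 \<le> Re s"
proof -
  obtain m :: nat and c a b where 1: "\<forall>i<m. a i \<in> B" "x = (\<Sum>i<m. smat (c i) (kron (a i) (b i)))"
    "s = (\<Sum>i<m. c i * mtr (\<phi> (a i) ** transpose (b i)))"
    using assms(2) unfolding dual_rep_def by blast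
  have "x \<in> tensor_space B"
    unfolding tensor_space_def cspan_def
    using 1 by (intro CollectI exI[of _ m] exI[of _ c] exI[of _ "\<lambda>i. kron (a i) (b i)"]) auto
  then have "x \<in> P_set B C"
    using assms(3) by (simp add: P_set_eq)
  then show ?thesis
    using assms(1) 1 unfolding C_positive_def Let_def by blast
qed

text \<open>Adding a large multiple of the order unit moves a self-adjoint element into P(B, C).\<close>

lemma dual_rep_self_adjoint_real:
  fixes x :: "('n::finite \<times> 'k::finite) cmat"
  assumes posC: "\<forall>\<alpha>\<in>C. positive_map \<alpha>" and "mat 1 \<in> B" "C_positive C B \<phi>"
    and x: "dual_rep B \<phi> x s" "mc_adj x = x"
  shows "Im s = 0"
proof -
  obtain M where M: "\<And>y :: ('n \<times> 'k) cmat. mc_adj y = y \<Longrightarrow> y + (M * norm y) *\<^sub>R mat 1 \<in> P_cone C"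
    using P_cone_order_unit[OF posC] by blast
  define s1 where "s1 = mtr (\<phi> (mat 1) ** transpose (mat 1))"
  have one: "dual_rep B \<phi> (mat 1) s1"
    using dual_rep_kron[OF \<open>mat 1 \<in> B\<close>, of \<phi> "mat 1"] by (simp add: s1_def kron_mat_one)
  have "Im s1 = 0"
    using dual_rep_nonneg[OF assms(3) one mat_one_mem_P_cone[OF posC]] by simp
  moreover have "Im (s + of_real (M * norm x) * s1) = 0"
    using dual_rep_nonneg[OF assms(3) dual_rep_add[OF x(1) dual_rep_scaleR[OF one]] M[OF x(2)]] by simp
  ultimately show ?thesis
    by simp
qed

lemma subspace_self_adjoint_dual_rep: "subspace {(x, Re s) | x s. dual_rep B \<phi> x s \<and> mc_adj x = x}"
  unfolding subspace_def
proof (intro conjI ballI allI)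
  show "0 \<in> {(x, Re s) | x s. dual_rep B \<phi> x s \<and> mc_adj x = x}"
    using dual_rep_zero by (force simp: zero_prod_def vec_eq_iff)
next
  fix u v assume "u \<in> {(x, Re s) | x s. dual_rep B \<phi> x s \<and> mc_adj x = x}"
    "v \<in> {(x, Re s) | x s. dual_rep B \<phi> x s \<and> mc_adj x = x}"
  then show "u + v \<in> {(x, Re s) | x s. dual_rep B \<phi> x s \<and> mc_adj x = x}"
    by (force intro: dual_rep_add simp: mc_adj_add)
next
  fix c :: real and u assume "u \<in> {(x, Re s) | x s. dual_rep B \<phi> x s \<and> mc_adj x = x}"
  then show "c *\<^sub>R u \<in> {(x, Re s) | x s. dual_rep B \<phi> x s \<and> mc_adj x = x}"
    by (force intro: dual_rep_scaleR simp: mc_adj_scaleR)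
qed

section \<open>Maps with a prescribed dual functional\<close>

definition re_part :: "'n::finite cmat \<Rightarrow> 'n cmat" where
  "re_part x = (1/2) *\<^sub>R (x + mc_adj x)"

definition im_part :: "'n::finite cmat \<Rightarrow> 'n cmat" where
  "im_part x = smat (- \<i> / 2) (x - mc_adj x)"

lemma re_part_add: "re_part (x + y) = re_part x + re_part y"
  by (simp add: re_part_def mc_adj_add algebra_simps)

lemma im_part_add: "im_part (x + y) = im_part x + im_part y"
  by (simp add: im_part_def mc_adj_add smat_add[symmetric] algebra_simps)

lemma re_part_smat: "re_part (smat c x) = Re c *\<^sub>R re_part x - Im c *\<^sub>R im_part x"
  by (simp add: vec_eq_iff re_part_def im_part_def complex_eq_iff del: vector_scaleR_component)
    (simp add: field_simps)

lemma im_part_smat: "im_part (smat c x) = Im c *\<^sub>R re_part x + Re c *\<^sub>R im_part x"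
  by (simp add: vec_eq_iff re_part_def im_part_def complex_eq_iff del: vector_scaleR_component)
    (simp add: field_simps)

lemma re_part_self_adjoint: "mc_adj x = x \<Longrightarrow> re_part x = x"
  by (simp add: re_part_def vec_eq_iff del: vector_scaleR_component)

lemma im_part_self_adjoint: "mc_adj x = x \<Longrightarrow> im_part x = 0"
  by (simp add: im_part_def vec_eq_iff)

lemma mc_adj_re_part: "mc_adj (re_part x) = re_part x"
  by (simp add: vec_eq_iff re_part_def del: vector_scaleR_component)

lemma mc_adj_im_part: "mc_adj (im_part x) = im_part x"
  by (simp add: vec_eq_iff im_part_def algebra_simps)

definition complexify :: "('n::finite cmat \<Rightarrow> real) \<Rightarrow> 'n cmat \<Rightarrow> complex" where
  "complexify g x = of_real (g (re_part x)) + \<i> * of_real (g (im_part x))"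

lemma complexify_add: "linear g \<Longrightarrow> complexify g (x + y) = complexify g x + complexify g y"
  by (simp add: complexify_def re_part_add im_part_add linear_add algebra_simps)

lemma complexify_smat: "linear g \<Longrightarrow> complexify g (smat c x) = c * complexify g x"
  by (simp add: complexify_def re_part_smat im_part_smat linear_add linear_diff linear_scale
      complex_eq_iff algebra_simps)

lemma complexify_self_adjoint: "linear g \<Longrightarrow> mc_adj x = x \<Longrightarrow> complexify g x = of_real (g x)"
  by (simp add: complexify_def re_part_self_adjoint im_part_self_adjoint linear_0)

definition tensor_dual :: "(('n::finite \<times> 'k::finite) cmat \<Rightarrow> complex) \<Rightarrow> 'n cmat \<Rightarrow> 'k cmat" where
  "tensor_dual F a = (\<chi> k l. F (kron a (matrix_unit k l)))"

lemma tensor_dual_nth: "tensor_dual F a $ k $ l = F (kron a (matrix_unit k l))"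
  by (simp add: tensor_dual_def)

context
  fixes F :: "('n::finite \<times> 'k::finite) cmat \<Rightarrow> complex"
  assumes F_add: "\<And>x y. F (x + y) = F x + F y"
    and F_smat: "\<And>c x. F (smat c x) = c * F x"
begin

private lemma F_sum: "F (sum f S) = (\<Sum>i\<in>S. F (f i))"
proof -
  have "F 0 = 0"
    using F_smat[of 0 0] by simp
  then show ?thesis
    using sum_comp_morphism[of F f S] F_add by simp
qed

lemma clinear_tensor_dual: "clinear_on UNIV (tensor_dual F)"
  unfolding clinear_on_def
  by (simp add: vec_eq_iff tensor_dual_nth kron_add_left F_add kron_smat_left F_smat)

lemma mtr_tensor_dual: "mtr (tensor_dual F a ** transpose b) = F (kron a b)"
proof -
  have "mtr (tensor_dual F a ** transpose b)
      = (\<Sum>k\<in>UNIV. \<Sum>l\<in>UNIV. F (kron a (matrix_unit k l)) * b $ k $ l)"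
    by (simp add: mtr_mult_transpose tensor_dual_nth)
  also have "\<dots> = F (kron a b)"
    by (subst (2) kron_matrix_unit_expansion) (simp add: F_sum F_smat mult.commute)
  finally show ?thesis .
qed

lemma C_positive_tensor_dual:
  assumes "\<And>x. x \<in> P_cone C \<Longrightarrow> Im (F x) = 0 \<and> 0 \<le> Re (F x)"
  shows "C_positive C UNIV (tensor_dual F)"
  unfolding C_positive_def Let_def
proof (intro ballI allI impI)
  fix x m c a b
  assume x: "x \<in> P_set UNIV C"
    and rep: "(\<forall>i<m. a i \<in> (UNIV :: 'n cmat set)) \<and> x = (\<Sum>i<m. smat (c i) (kron (a i) (b i)))"
  have "(\<Sum>i<m. c i * mtr (tensor_dual F (a i) ** transpose (b i))) = F x"
    using rep by (simp add: mtr_tensor_dual F_sum F_smat)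
  moreover have "x \<in> P_cone C"
    using x by (simp add: P_set_eq)
  ultimately show "Im (\<Sum>i<m. c i * mtr (tensor_dual F (a i) ** transpose (b i))) = 0 \<and>
      0 \<le> Re (\<Sum>i<m. c i * mtr (tensor_dual F (a i) ** transpose (b i)))"
    using assms by simp
qed

end

lemma complexify_dual_rep:
  assumes g: "linear g" and B: "\<forall>a\<in>B. mc_adj a \<in> B"
    and sa: "\<And>x s. dual_rep B \<phi> x s \<Longrightarrow> mc_adj x = x \<Longrightarrow> Im s = 0 \<and> g x = Re s"
    and x: "dual_rep B \<phi> x s"
  shows "complexify g x = s"
proof -
  obtain s' where x': "dual_rep B \<phi> (mc_adj x) s'"
    using dual_rep_mc_adj[OF x B] .
  define u where "u = of_real (1/2) * (s + s')"
  define v where "v = (- \<i> / 2) * (s + (-1) * s')"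
  have "dual_rep B \<phi> (re_part x) u"
    unfolding re_part_def u_def by (intro dual_rep_scaleR dual_rep_add x x')
  then have u: "Im u = 0" "g (re_part x) = Re u"
    using sa mc_adj_re_part by blast+
  have "dual_rep B \<phi> (im_part x) v"
    unfolding im_part_def v_def diff_conv_add_uminus smat_minus_one[symmetric]
    by (intro dual_rep_smat dual_rep_add x x')
  then have v: "Im v = 0" "g (im_part x) = Re v"
    using sa mc_adj_im_part by blast+
  have "complexify g x = u + \<i> * v"
    using u v by (simp add: complexify_def complex_eq_iff)
  also have "\<dots> = s"
    by (simp add: u_def v_def field_simps)
  finally show ?thesis .
qed

lemma positive_dual_extension:
  fixes \<phi> :: "'n::finite cmat \<Rightarrow> 'k::finite cmat"
  assumes posC: "\<forall>\<alpha>\<in>C. positive_map \<alpha>" and B: "mat 1 \<in> B" "\<forall>a\<in>B. mc_adj a \<in> B"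
    and \<phi>: "C_positive C B \<phi>"
  obtains g :: "('n \<times> 'k) cmat \<Rightarrow> real"
  where "linear g" "\<forall>p\<in>P_cone C. 0 \<le> g p" "\<And>x s. dual_rep B \<phi> x s \<Longrightarrow> complexify g x = s"
proof -
  define R where "R = {(x, Re s) | x s. dual_rep B \<phi> x s \<and> mc_adj x = x}"
  obtain M where M: "0 \<le> M" "\<And>y :: ('n \<times> 'k) cmat. mc_adj y = y \<Longrightarrow> y + (M * norm y) *\<^sub>R mat 1 \<in> P_cone C"
    using P_cone_order_unit[OF posC] by blast
  have "dual_rep B \<phi> (mat 1) (mtr (\<phi> (mat 1) ** transpose (mat 1)))"
    using dual_rep_kron[OF B(1), of \<phi> "mat 1"] by (simp add: kron_mat_one)
  then have "(mat 1, Re (mtr (\<phi> (mat 1) ** transpose (mat 1)))) \<in> R"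
    unfolding R_def using mc_adj_mat_one by blast
  then obtain g where g: "linear g" "\<forall>(x, s)\<in>R. g x = s" "\<forall>p\<in>P_cone C. 0 \<le> g p"
    using riesz_extension.exists_positive_extension[OF riesz_extension.intro[OF
          convex_cone_P_cone[OF posC] subspace_self_adjoint P_cone_self_adjoint _
          subspace_self_adjoint_dual_rep[of B \<phi>, folded R_def] _ mat_one_mem_P_cone[OF posC] M]]
      dual_rep_nonneg[OF \<phi>] by (fastforce simp: R_def)
  moreover have "complexify g x = s" if "dual_rep B \<phi> x s" for x s
  proof (rule complexify_dual_rep[OF g(1) B(2) _ that])
    fix y t assume "dual_rep B \<phi> y t" "mc_adj y = y"
    moreover from this have "(y, Re t) \<in> R"
      unfolding R_def by blast
    ultimately show "Im t = 0 \<and> g y = Re t"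
      using dual_rep_self_adjoint_real[OF posC B(1) \<phi>] g(2) by auto
  qed
  ultimately show ?thesis
    using that by blast
qed

theorem corollary2:
  fixes C :: "('k::finite cmat \<Rightarrow> 'k cmat) set"
    and B :: "('n::finite) cmat set"
    and \<phi> :: "'n cmat \<Rightarrow> 'k cmat"
  assumes "mapping_cone C"
    and "unital_cstar_subalg B"
    and "clinear_on B \<phi>"
    and "C_positive C B \<phi>"
  shows "\<exists>\<psi>. clinear_on UNIV \<psi> \<and> C_positive C UNIV \<psi> \<and> (\<forall>a\<in>B. \<psi> a = \<phi> a)"
proof -
  have posC: "\<forall>\<alpha>\<in>C. positive_map \<alpha>"
    using assms(1) by (simp add: mapping_cone_def)
  have B: "mat 1 \<in> B" "\<forall>a\<in>B. mc_adj a \<in> B"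
    using assms(2) by (simp_all add: unital_cstar_subalg_def)
  obtain g where g: "linear g" "\<forall>p\<in>P_cone C. 0 \<le> g p"
    and F: "\<And>x s. dual_rep B \<phi> x s \<Longrightarrow> complexify g x = s"
    using positive_dual_extension[OF posC B assms(4)] by blast
  show ?thesis
  proof (intro exI conjI ballI)
    show "clinear_on UNIV (tensor_dual (complexify g))"
      by (intro clinear_tensor_dual complexify_add complexify_smat g(1))
    show "C_positive C UNIV (tensor_dual (complexify g))"
      using g(2) by (intro C_positive_tensor_dual complexify_add complexify_smat g(1))
        (simp add: complexify_self_adjoint[OF g(1)] P_cone_def)
    show "tensor_dual (complexify g) a = \<phi> a" if "a \<in> B" for a
      using F[OF dual_rep_kron[OF that]]
      by (simp add: vec_eq_iff tensor_dual_nth mtr_mult_transpose_matrix_unit)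
  qed
qed

end
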